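(* The functor $i_\ell:\mathbf{Gr}\to\mathbf{Gr}_\ell$, which is left Quillen as the left adjoint of $(-)^\circ$ for the Matsushita model structures, is also right Quillen (for the same model structures), i.e. it preserves fibrations and trivial fibrations.
   Context: A simplicial complex consists of a vertex set and a collection of nonempty finite subsets (simplices) containing all singletons and closed under nonempty subsets; maps are vertex functions preserving simplices; $\mathbf{Cpx}$ is the category. $\mathbf{Gr}$ (reflexive graphs) is the full subcategory of complexes whose simplices have at most two elements; $\mathrm{C}\ell:\mathbf{Gr}\to\mathbf{Cpx}$ is the clique complex functor. $\mathbf{\Delta}^n$ is the complex on $\{0,\dots,n\}$ with all nonempty subsets simplices, $\mathrm{Sing}(K)_n=\mathbf{Cpx}(\mathbf{\Delta}^n,K)$, $\mathrm{Ex}$ is the right adjoint of barycentric subdivision. Matsushita model structure on $\mathbf{Gr}$: $f$ is a weak equivalence iff $\mathrm{Sing}\,\mathrm{C}\ell(f)$ is a weak homotopy equivalence, a fibration iff $\mathrm{Ex}^2\mathrm{Sing}\,\mathrm{C}\ell(f)$ is a Kan fibration, cofibrations by left lifting against trivial fibrations. A loop graph is a set with a symmetric relation; maps preserve the relation; $\mathbf{Gr}_\ell$ is the category. $i_\ell$ regards a reflexive graph as a loop graph with every vertex looped; it has a left adjoint $(-)_\ell$ (add all loops) and a right adjoint $(-)^\circ$ (maximal reflexive subgraph, induced on looped vertices). Matsushita model structure on $\mathbf{Gr}_\ell$: $f$ is a weak equivalence (fibration) iff $f^\circ$ is one in $\mathbf{Gr}$; cofibrations by left lifting against trivial fibrations.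 *)

theory Defs
  imports "HOL-Analysis.Analysis" "HOL-Homology.Simplices"
begin

text \<open>A simplicial set: sets of n-simplices, and for every monotone
  theta : [m] -> [n] an action X_n -> X_m, written act m n theta.\<close>
record 'a sset =
  cells :: "nat \<Rightarrow> 'a set"
  act   :: "nat \<Rightarrow> nat \<Rightarrow> (nat \<Rightarrow> nat) \<Rightarrow> 'a \<Rightarrow> 'a"

definition mono_map :: "nat \<Rightarrow> nat \<Rightarrow> (nat \<Rightarrow> nat) \<Rightarrow> bool" where
  "mono_map m n \<theta> \<longleftrightarrow> (\<forall>i\<le>m. \<theta> i \<le> n) \<and> (\<forall>i j. i \<le> j \<and> j \<le> m \<longrightarrow> \<theta> i \<le> \<theta> j)"

definition coface :: "nat \<Rightarrow> nat \<Rightarrow> nat" where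
  "coface i j = (if j < i then j else Suc j)"

definition face :: "'a sset \<Rightarrow> nat \<Rightarrow> nat \<Rightarrow> 'a \<Rightarrow> 'a" where
  "face X p i x = act X p (Suc p) (coface i) x"

text \<open>Kan fibration: right lifting property against all horn inclusions
  Lambda^(p+1)_k -> Delta^(p+1); maps out of the horn are written as compatible
  families of p-simplices (x_i) for i ~= k.\<close>
definition kan_fibration :: "'a sset \<Rightarrow> 'b sset \<Rightarrow> (nat \<Rightarrow> 'a \<Rightarrow> 'b) \<Rightarrow> bool" where
  "kan_fibration X Y f \<longleftrightarrow>
     (\<forall>p k xs y.
        k \<le> Suc p \<and>
        (\<forall>i\<le>Suc p. i \<noteq> k \<longrightarrow> xs i \<in> cells X p) \<and>
        (\<forall>i j. i < j \<and> j \<le> Suc p \<and> i \<noteq> k \<and> j \<noteq> k \<longrightarrow>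
              face X (p - 1) i (xs j) = face X (p - 1) (j - 1) (xs i)) \<and>
        y \<in> cells Y (Suc p) \<and>
        (\<forall>i\<le>Suc p. i \<noteq> k \<longrightarrow> face Y p i y = f p (xs i))
      \<longrightarrow> (\<exists>x\<in>cells X (Suc p). (\<forall>i\<le>Suc p. i \<noteq> k \<longrightarrow> face X p i x = xs i)
                                 \<and> f (Suc p) x = y))"

text \<open>m-simplices of sd Delta^n = nerve of the poset of nonempty subsets of [n]:
  weakly increasing chains S_0 <= ... <= S_m.\<close>
definition sd_simplices :: "nat \<Rightarrow> nat \<Rightarrow> nat set list set" where
  "sd_simplices n m = {c. length c = Suc m \<and> (\<forall>i<Suc m. c ! i \<noteq> {} \<and> c ! i \<subseteq> {..n})
       \<and> (\<forall>i j. i \<le> j \<and> j < Suc m \<longrightarrow> c ! i \<subseteq> c ! j)}"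

definition chain_act :: "nat \<Rightarrow> (nat \<Rightarrow> nat) \<Rightarrow> nat set list \<Rightarrow> nat set list" where
  "chain_act k \<psi> c = map (\<lambda>j. c ! \<psi> j) [0..<Suc k]"

text \<open>Ex X_n = Hom(sd Delta^n, X): natural families, extensional outside the chains.\<close>
definition Ex :: "'a sset \<Rightarrow> (nat \<Rightarrow> nat set list \<Rightarrow> 'a) sset" where
  "Ex X = \<lparr> cells = (\<lambda>n. {g.
        (\<forall>m c. c \<in> sd_simplices n m \<longrightarrow> g m c \<in> cells X m) \<and>
        (\<forall>k m \<psi> c. mono_map k m \<psi> \<and> c \<in> sd_simplices n m \<longrightarrow>
                     g k (chain_act k \<psi> c) = act X k m \<psi> (g m c)) \<and>
        (\<forall>m c. c \<notin> sd_simplices n m \<longrightarrow> g m c = undefined)}),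
      act = (\<lambda>m n \<theta> g. (\<lambda>k c. if c \<in> sd_simplices m k then g k (map ((`) \<theta>) c) else undefined)) \<rparr>"

definition Ex_map :: "(nat \<Rightarrow> 'a \<Rightarrow> 'b) \<Rightarrow> nat \<Rightarrow> (nat \<Rightarrow> nat set list \<Rightarrow> 'a) \<Rightarrow> (nat \<Rightarrow> nat set list \<Rightarrow> 'b)" where
  "Ex_map f n g = (\<lambda>k c. if c \<in> sd_simplices n k then f k (g k c) else undefined)"

definition simplex_top :: "nat \<Rightarrow> (nat \<Rightarrow> real) topology" where
  "simplex_top n = subtopology (powertop_real UNIV) (standard_simplex n)"

definition push :: "nat \<Rightarrow> (nat \<Rightarrow> nat) \<Rightarrow> (nat \<Rightarrow> real) \<Rightarrow> (nat \<Rightarrow> real)" where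
  "push m \<theta> t = (\<lambda>j. \<Sum>i\<in>{i. i \<le> m \<and> \<theta> i = j}. t i)"

definition real_pts :: "'a sset \<Rightarrow> (nat \<times> 'a \<times> (nat \<Rightarrow> real)) set" where
  "real_pts X = {(n, x, t). x \<in> cells X n \<and> t \<in> standard_simplex n}"

definition real_gen :: "'a sset \<Rightarrow> ((nat \<times> 'a \<times> (nat \<Rightarrow> real)) \<times> (nat \<times> 'a \<times> (nat \<Rightarrow> real))) set" where
  "real_gen X = {((m, act X m n \<theta> x, t), (n, x, push m \<theta> t)) | m n \<theta> x t.
                   mono_map m n \<theta> \<and> x \<in> cells X n \<and> t \<in> standard_simplex m}"

definition real_eq :: "'a sset \<Rightarrow> ((nat \<times> 'a \<times> (nat \<Rightarrow> real)) \<times> (nat \<times> 'a \<times> (nat \<Rightarrow> real))) set" where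
  "real_eq X = (real_gen X \<union> (real_gen X)\<inverse>)\<^sup>*"

definition char_map :: "'a sset \<Rightarrow> nat \<Rightarrow> 'a \<Rightarrow> (nat \<Rightarrow> real) \<Rightarrow> (nat \<times> 'a \<times> (nat \<Rightarrow> real)) set" where
  "char_map X n x t = real_eq X `` {(n, x, t)}"

text \<open>|X| = (disjoint union of X_n x Delta^n)/~ with the colimit (weak) topology.\<close>
definition realization :: "'a sset \<Rightarrow> (nat \<times> 'a \<times> (nat \<Rightarrow> real)) set topology" where
  "realization X = topology (\<lambda>U. U \<subseteq> real_pts X // real_eq X \<and>
       (\<forall>n x. x \<in> cells X n \<longrightarrow>
          openin (simplex_top n) {t \<in> standard_simplex n. char_map X n x t \<in> U}))"

definition real_map :: "'a sset \<Rightarrow> 'b sset \<Rightarrow> (nat \<Rightarrow> 'a \<Rightarrow> 'b)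
     \<Rightarrow> (nat \<times> 'a \<times> (nat \<Rightarrow> real)) set \<Rightarrow> (nat \<times> 'b \<times> (nat \<Rightarrow> real)) set" where
  "real_map X Y f q = real_eq Y `` ((\<lambda>(n, x, t). (n, f n x, t)) ` q)"

definition sphere_base :: "nat \<Rightarrow> real" where
  "sphere_base = (\<lambda>i. if i = 0 then 1 else 0)"

text \<open>Weak homotopy equivalence of spaces: bijection on path components and
  bijection (hence isomorphism) on all pi_n, n >= 1, at all base points.\<close>
definition weak_heq :: "'a topology \<Rightarrow> 'b topology \<Rightarrow> ('a \<Rightarrow> 'b) \<Rightarrow> bool" where
  "weak_heq X Y f \<longleftrightarrow> continuous_map X Y f \<and>
     (\<forall>y\<in>topspace Y. \<exists>x\<in>topspace X. path_component_of Y (f x) y) \<and>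
     (\<forall>x1\<in>topspace X. \<forall>x2\<in>topspace X. path_component_of Y (f x1) (f x2) \<longrightarrow> path_component_of X x1 x2) \<and>
     (\<forall>n\<ge>1. \<forall>x\<in>topspace X.
        (\<forall>g. continuous_map (nsphere n) Y g \<and> g sphere_base = f x \<longrightarrow>
             (\<exists>h. continuous_map (nsphere n) X h \<and> h sphere_base = x \<and>
                  homotopic_with (\<lambda>k. k sphere_base = f x) (nsphere n) Y g (f \<circ> h))) \<and>
        (\<forall>h1 h2. continuous_map (nsphere n) X h1 \<and> h1 sphere_base = x \<and>
                 continuous_map (nsphere n) X h2 \<and> h2 sphere_base = x \<and>
                 homotopic_with (\<lambda>k. k sphere_base = f x) (nsphere n) Y (f \<circ> h1) (f \<circ> h2) \<longrightarrow>
                 homotopic_with (\<lambda>k. k sphere_base = x) (nsphere n) X h1 h2))"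

definition sset_weq :: "'a sset \<Rightarrow> 'b sset \<Rightarrow> (nat \<Rightarrow> 'a \<Rightarrow> 'b) \<Rightarrow> bool" where
  "sset_weq X Y f \<longleftrightarrow> weak_heq (realization X) (realization Y) (real_map X Y f)"

type_synonym 'a complex = "'a set \<times> 'a set set"

text \<open>Sing(K)_n = Cpx(Delta^n, K); an n-simplex is a vertex function on {0..n},
  stored as a list of length n+1.\<close>
definition Sing :: "'a complex \<Rightarrow> 'a list sset" where
  "Sing K = \<lparr> cells = (\<lambda>n. {xs. length xs = Suc n \<and> (\<forall>i\<le>n. xs ! i \<in> fst K) \<and>
                         (\<forall>S. S \<noteq> {} \<and> S \<subseteq> {..n} \<longrightarrow> (\<lambda>i. xs ! i) ` S \<in> snd K)}),
              act = (\<lambda>m n \<theta> xs. map (\<lambda>j. xs ! \<theta> j) [0..<Suc m]) \<rparr>"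

definition Sing_map :: "('a \<Rightarrow> 'b) \<Rightarrow> nat \<Rightarrow> 'a list \<Rightarrow> 'b list" where
  "Sing_map f n xs = map f xs"

type_synonym 'a graph = "'a set \<times> ('a \<Rightarrow> 'a \<Rightarrow> bool)"

definition loop_graph :: "'a graph \<Rightarrow> bool" where
  "loop_graph G \<longleftrightarrow> (\<forall>x y. snd G x y \<longrightarrow> x \<in> fst G \<and> y \<in> fst G) \<and>
                     (\<forall>x y. snd G x y \<longrightarrow> snd G y x)"

definition refl_graph :: "'a graph \<Rightarrow> bool" where
  "refl_graph G \<longleftrightarrow> loop_graph G \<and> (\<forall>x\<in>fst G. snd G x x)"

definition graph_map :: "'a graph \<Rightarrow> 'b graph \<Rightarrow> ('a \<Rightarrow> 'b) \<Rightarrow> bool" where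
  "graph_map G H f \<longleftrightarrow> f ` fst G \<subseteq> fst H \<and> (\<forall>x y. snd G x y \<longrightarrow> snd H (f x) (f y))"

definition Cl :: "'a graph \<Rightarrow> 'a complex" where
  "Cl G = (fst G, {S. S \<noteq> {} \<and> finite S \<and> S \<subseteq> fst G \<and> (\<forall>a\<in>S. \<forall>b\<in>S. snd G a b)})"

definition weq_Gr :: "'a graph \<Rightarrow> 'b graph \<Rightarrow> ('a \<Rightarrow> 'b) \<Rightarrow> bool" where
  "weq_Gr G H f \<longleftrightarrow> sset_weq (Sing (Cl G)) (Sing (Cl H)) (Sing_map f)"

definition fib_Gr :: "'a graph \<Rightarrow> 'b graph \<Rightarrow> ('a \<Rightarrow> 'b) \<Rightarrow> bool" where
  "fib_Gr G H f \<longleftrightarrow> kan_fibration (Ex (Ex (Sing (Cl G)))) (Ex (Ex (Sing (Cl H))))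
                                  (Ex_map (Ex_map (Sing_map f)))"

text \<open>i_l: a reflexive graph regarded as a loop graph (all vertices looped).\<close>
definition i_loop :: "'a graph \<Rightarrow> 'a graph" where
  "i_loop G = G"

text \<open>(-)^o: maximal reflexive subgraph, induced on the looped vertices; on maps f^o is
  the restriction of f.\<close>
definition core :: "'a graph \<Rightarrow> 'a graph" where
  "core G = ({v \<in> fst G. snd G v v}, (\<lambda>x y. snd G x y \<and> snd G x x \<and> snd G y y))"

definition weq_Grl :: "'a graph \<Rightarrow> 'b graph \<Rightarrow> ('a \<Rightarrow> 'b) \<Rightarrow> bool" where
  "weq_Grl G H f \<longleftrightarrow> weq_Gr (core G) (core H) f"

definition fib_Grl :: "'a graph \<Rightarrow> 'b graph \<Rightarrow> ('a \<Rightarrow> 'b) \<Rightarrow> bool" where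
  "fib_Grl G H f \<longleftrightarrow> fib_Gr (core G) (core H) f"

end

theory Submission
  imports Defs
begin

text \<open>Fibrations and weak equivalences of \<open>Gr\<^sub>\<ell>\<close> are created by \<open>(-)\<degree>\<close>, and
  \<open>(-)\<degree> \<circ> i\<^sub>\<ell>\<close> is the identity on reflexive graphs, since every vertex of a
  reflexive graph is already looped. Hence \<open>i\<^sub>\<ell> f\<close> is a (trivial) fibration
  exactly when \<open>f\<close> is one.\<close>

lemma core_refl_graph:
  assumes "refl_graph G"
  shows "core G = G"
proof -
  obtain V E where G: "G = (V, E)" by (cases G)
  have "{v \<in> V. E v v} = V"
    using assms G by (auto simp: refl_graph_def)
  moreover have "(\<lambda>x y. E x y \<and> E x x \<and> E y y) = E"
    using assms G by (fastforce simp: refl_graph_def loop_graph_def)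
  ultimately show ?thesis by (simp add: core_def G)
qed

lemma core_i_loop: "refl_graph G \<Longrightarrow> core (i_loop G) = G"
  by (simp add: i_loop_def core_refl_graph)

lemma fib_Grl_i_loop_iff:
  "refl_graph G \<Longrightarrow> refl_graph H \<Longrightarrow> fib_Grl (i_loop G) (i_loop H) f \<longleftrightarrow> fib_Gr G H f"
  by (simp add: fib_Grl_def core_i_loop)

lemma weq_Grl_i_loop_iff:
  "refl_graph G \<Longrightarrow> refl_graph H \<Longrightarrow> weq_Grl (i_loop G) (i_loop H) f \<longleftrightarrow> weq_Gr G H f"
  by (simp add: weq_Grl_def core_i_loop)

theorem lemma5p18:
  fixes G :: "'a graph" and H :: "'b graph" and f :: "'a \<Rightarrow> 'b"
  assumes "refl_graph G" and "refl_graph H" and "graph_map G H f"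
  shows "(fib_Gr G H f \<longrightarrow> fib_Grl (i_loop G) (i_loop H) f) \<and>
         (fib_Gr G H f \<and> weq_Gr G H f \<longrightarrow>
            fib_Grl (i_loop G) (i_loop H) f \<and> weq_Grl (i_loop G) (i_loop H) f)"
  using fib_Grl_i_loop_iff[OF assms(1,2)] weq_Grl_i_loop_iff[OF assms(1,2)]
  by blast

end
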